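(* Let $\mathbf M=(M,\vee_{\mathbf M},(\sqsubseteq^n_{\mathbf M})_{n\ge1})$ be a multi-argument specialization semilattice and let $\widetilde{\mathbf M}$, $K$ and $\upsilon_{\mathbf M}$ be as constructed in the context. Then: (1) $\widetilde{\mathbf M}$ is a principal regular multi-argument specialization semilattice. (2) $\upsilon_{\mathbf M}$ is an embedding of $\mathbf M$ into $\widetilde{\mathbf M}$. (3) For every principal regular multi-argument specialization semilattice $\mathbf T$ and every homomorphism $\eta:\mathbf M\to\mathbf T$ there is a unique $K$-homomorphism $\widetilde\eta:\widetilde{\mathbf M}\to\mathbf T$ such that $\widetilde\eta(\upsilon_{\mathbf M}(a))=\eta(a)$ for all $a\in M$. (4) If $\mathbf U$ is another multi-argument specialization semilattice and $\psi:\mathbf M\to\mathbf U$ is a homomorphism, then there is a unique $K$-homomorphism $\widetilde\psi:\widetilde{\mathbf M}\to\widetilde{\mathbf U}$ such that $\widetilde\psi(\upsilon_{\mathbf M}(a))=\upsilon_{\mathbf U}(\psi(a))$ for all $a\in M$ (where $\widetilde{\mathbf U},\upsilon_{\mathbf U}$ are constructed from $\mathbf U$ in the same way).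
   Context: A multi-argument specialization semilattice is a join semilattice $(M,\vee)$ (order $a\le b$ iff $a\vee b=b$) with, for each $n\ge1$, an $(n+1)$-ary relation $a\sqsubseteq^n b_1,\dots,b_n$ (also written $a\sqsubseteq b_1,\dots,b_n$) such that: (M1) $a\sqsubseteq a$; (M2) $a\sqsubseteq b_1,\dots,b_n$ and $b_1\sqsubseteq c$ imply $a\sqsubseteq c,b_2,\dots,b_n$; (M3) $a\le b$ and $b\sqsubseteq c_1,\dots,c_m$ imply $a\sqsubseteq c_1,\dots,c_m$; (M4) $a\sqsubseteq b_1,\dots,b_n$ implies $a\sqsubseteq b_{\sigma1},\dots,b_{\sigma n}$ for every permutation $\sigma$; (M5) $a\sqsubseteq b_1,\dots,b_n,b_n$ implies $a\sqsubseteq b_1,\dots,b_n$; (M6) $a\sqsubseteq b_1,\dots,b_n$ implies $a\sqsubseteq b_1,\dots,b_n,b_{n+1}$; (M7) $a\sqsubseteq b_1,\dots,b_n$ and $a_1\sqsubseteq b_1,\dots,b_n$ imply $a\vee a_1\sqsubseteq b_1,\dots,b_n$. It is principal if for every $x$ there is a $\le$-largest $y$ with $y\sqsubseteq^1 x$, denoted $Kx$; a principal one is regular if $a\sqsubseteq^n b_1,\dots,b_n$ holds iff $a\le Kb_1\vee\dots\vee Kb_n$. A homomorphism is a join-preserving map $\varphi$ with $a\sqsubseteq^n b_1,\dots,b_n\Rightarrow\varphi(a)\sqsubseteq^n\varphi(b_1),\dots,\varphi(b_n)$ for all $n$; an embedding is an injective homomorphism for which the converse implications also hold. A $K$-homomorphism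 between principal ones is a homomorphism $\varphi$ with $\varphi(Ka)=K\varphi(a)$ for all $a$. Construction: let $M^{<\omega}$ be the set of finite subsets of $M$. On $M\times M^{<\omega}$ put $(a,\{b_1,\dots,b_h\})\precsim(c,\{d_1,\dots,d_k\})$ iff (a1) there is $d\in M$ with $d\sqsubseteq_{\mathbf M}d_1,\dots,d_k$ and $a\le_{\mathbf M}c\vee_{\mathbf M}d$ (if $k=0$ this reads $a\le_{\mathbf M}c$), and (a2) for every $i\le h$ there is $j\le k$ with $b_i\sqsubseteq^1_{\mathbf M}d_j$. Let $x\sim y$ iff $x\precsim y$ and $y\precsim x$ (an equivalence relation and a congruence for the product semilattice $(M,\vee_{\mathbf M})\times(M^{<\omega},\cup)$). Let $\widetilde M$ be the quotient, with classes $[a,\{b_1,\dots,b_h\}]$ and join $[a,\{b_1,\dots,b_h\}]\vee[c,\{d_1,\dots,d_k\}]=[a\vee_{\mathbf M}c,\{b_1,\dots,b_h,d_1,\dots,d_k\}]$, and $\le$ the induced order. Define $K[a,\{b_1,\dots,b_h\}]=[a,\{a\vee_{\mathbf M}b_1\vee_{\mathbf M}\dots\vee_{\mathbf M}b_h\}]$ (well defined). For $n\ge1$ define $x\sqsubseteq^n y_1,\dots,y_n$ in $\widetilde M$ iff $x\le Ky_1\vee\dots\vee Ky_n$. Set $\widetilde{\mathbf M}=(\widetilde M,\vee,(\sqsubseteq^n)_{n\ge1})$ and $\upsilon_{\mathbf M}(a)=[a,\emptyset]$ for $a\in M$. *)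

theory Defs
  imports Main "HOL-Library.Multiset"
begin

text \<open>A multi-argument specialization semilattice is given by a carrier set M,
a binary join j, and a relation S a bs meaning a \<sqsubseteq>^n b_1,...,b_n where
bs = [b_1,...,b_n] (n = length bs \<ge> 1).\<close>

definition sle :: "('a \<Rightarrow> 'a \<Rightarrow> 'a) \<Rightarrow> 'a \<Rightarrow> 'a \<Rightarrow> bool" where
  "sle j a b \<longleftrightarrow> j a b = b"

fun joinl :: "('a \<Rightarrow> 'a \<Rightarrow> 'a) \<Rightarrow> 'a list \<Rightarrow> 'a" where
  "joinl j [] = undefined"
| "joinl j [x] = x"
| "joinl j (x # y # ys) = j x (joinl j (y # ys))"

definition mass :: "'a set \<Rightarrow> ('a \<Rightarrow> 'a \<Rightarrow> 'a) \<Rightarrow> ('a \<Rightarrow> 'a list \<Rightarrow> bool) \<Rightarrow> bool" where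
  "mass M j S \<longleftrightarrow>
     (\<forall>a\<in>M. \<forall>b\<in>M. j a b \<in> M) \<and>
     (\<forall>a\<in>M. \<forall>b\<in>M. \<forall>c\<in>M. j (j a b) c = j a (j b c)) \<and>
     (\<forall>a\<in>M. \<forall>b\<in>M. j a b = j b a) \<and>
     (\<forall>a\<in>M. j a a = a) \<and>
     (\<forall>a bs. S a bs \<longrightarrow> a \<in> M \<and> bs \<noteq> [] \<and> set bs \<subseteq> M) \<and>
     (\<forall>a\<in>M. S a [a]) \<and>
     (\<forall>a b bs c. S a (b # bs) \<and> S b [c] \<longrightarrow> S a (c # bs)) \<and>
     (\<forall>a\<in>M. \<forall>b cs. sle j a b \<and> S b cs \<longrightarrow> S a cs) \<and>
     (\<forall>a bs bs'. S a bs \<and> mset bs' = mset bs \<longrightarrow> S a bs') \<and>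
     (\<forall>a bs b. S a (bs @ [b, b]) \<longrightarrow> S a (bs @ [b])) \<and>
     (\<forall>a bs b. S a bs \<and> b \<in> M \<longrightarrow> S a (bs @ [b])) \<and>
     (\<forall>a a1 bs. S a bs \<and> S a1 bs \<longrightarrow> S (j a a1) bs)"

definition principal :: "'a set \<Rightarrow> ('a \<Rightarrow> 'a \<Rightarrow> 'a) \<Rightarrow> ('a \<Rightarrow> 'a list \<Rightarrow> bool) \<Rightarrow> bool" where
  "principal M j S \<longleftrightarrow> mass M j S \<and>
     (\<forall>x\<in>M. \<exists>y\<in>M. S y [x] \<and> (\<forall>z\<in>M. S z [x] \<longrightarrow> sle j z y))"

definition Kop :: "'a set \<Rightarrow> ('a \<Rightarrow> 'a \<Rightarrow> 'a) \<Rightarrow> ('a \<Rightarrow> 'a list \<Rightarrow> bool) \<Rightarrow> 'a \<Rightarrow> 'a" where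
  "Kop M j S x = (THE y. y \<in> M \<and> S y [x] \<and> (\<forall>z\<in>M. S z [x] \<longrightarrow> sle j z y))"

definition regular :: "'a set \<Rightarrow> ('a \<Rightarrow> 'a \<Rightarrow> 'a) \<Rightarrow> ('a \<Rightarrow> 'a list \<Rightarrow> bool) \<Rightarrow> bool" where
  "regular M j S \<longleftrightarrow> principal M j S \<and>
     (\<forall>a bs. S a bs \<longleftrightarrow>
        (a \<in> M \<and> bs \<noteq> [] \<and> set bs \<subseteq> M \<and> sle j a (joinl j (map (Kop M j S) bs))))"

definition mhom :: "'a set \<Rightarrow> ('a \<Rightarrow> 'a \<Rightarrow> 'a) \<Rightarrow> ('a \<Rightarrow> 'a list \<Rightarrow> bool) \<Rightarrow>
    'b set \<Rightarrow> ('b \<Rightarrow> 'b \<Rightarrow> 'b) \<Rightarrow> ('b \<Rightarrow> 'b list \<Rightarrow> bool) \<Rightarrow> ('a \<Rightarrow> 'b) \<Rightarrow> bool" where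
  "mhom M j S N k R f \<longleftrightarrow>
     (\<forall>a\<in>M. f a \<in> N) \<and>
     (\<forall>a\<in>M. \<forall>b\<in>M. f (j a b) = k (f a) (f b)) \<and>
     (\<forall>a bs. S a bs \<longrightarrow> R (f a) (map f bs))"

definition membedding :: "'a set \<Rightarrow> ('a \<Rightarrow> 'a \<Rightarrow> 'a) \<Rightarrow> ('a \<Rightarrow> 'a list \<Rightarrow> bool) \<Rightarrow>
    'b set \<Rightarrow> ('b \<Rightarrow> 'b \<Rightarrow> 'b) \<Rightarrow> ('b \<Rightarrow> 'b list \<Rightarrow> bool) \<Rightarrow> ('a \<Rightarrow> 'b) \<Rightarrow> bool" where
  "membedding M j S N k R f \<longleftrightarrow> mhom M j S N k R f \<and> inj_on f M \<and>
     (\<forall>a\<in>M. \<forall>bs. bs \<noteq> [] \<and> set bs \<subseteq> M \<and> R (f a) (map f bs) \<longrightarrow> S a bs)"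

definition Khom :: "'a set \<Rightarrow> ('a \<Rightarrow> 'a \<Rightarrow> 'a) \<Rightarrow> ('a \<Rightarrow> 'a list \<Rightarrow> bool) \<Rightarrow>
    'b set \<Rightarrow> ('b \<Rightarrow> 'b \<Rightarrow> 'b) \<Rightarrow> ('b \<Rightarrow> 'b list \<Rightarrow> bool) \<Rightarrow> ('a \<Rightarrow> 'b) \<Rightarrow> bool" where
  "Khom M j S N k R f \<longleftrightarrow> mhom M j S N k R f \<and>
     (\<forall>a\<in>M. f (Kop M j S a) = Kop N k R (f a))"

definition jset :: "('a \<Rightarrow> 'a \<Rightarrow> 'a) \<Rightarrow> 'a \<Rightarrow> 'a set \<Rightarrow> 'a" where
  "jset j a B = foldr j (SOME xs. set xs = B) a"

definition Pdom :: "'a set \<Rightarrow> ('a \<times> 'a set) set" where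
  "Pdom M = {(a, B). a \<in> M \<and> B \<subseteq> M \<and> finite B}"

definition prec :: "'a set \<Rightarrow> ('a \<Rightarrow> 'a \<Rightarrow> 'a) \<Rightarrow> ('a \<Rightarrow> 'a list \<Rightarrow> bool) \<Rightarrow>
    'a \<times> 'a set \<Rightarrow> 'a \<times> 'a set \<Rightarrow> bool" where
  "prec M j S p q \<longleftrightarrow>
     (if snd q = {} then sle j (fst p) (fst q)
      else (\<exists>d\<in>M. \<exists>ds. set ds = snd q \<and> distinct ds \<and> S d ds \<and> sle j (fst p) (j (fst q) d))) \<and>
     (\<forall>b\<in>snd p. \<exists>d\<in>snd q. S b [d])"

definition cls :: "'a set \<Rightarrow> ('a \<Rightarrow> 'a \<Rightarrow> 'a) \<Rightarrow> ('a \<Rightarrow> 'a list \<Rightarrow> bool) \<Rightarrow>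
    'a \<times> 'a set \<Rightarrow> ('a \<times> 'a set) set" where
  "cls M j S p = {q \<in> Pdom M. prec M j S q p \<and> prec M j S p q}"

definition tcar :: "'a set \<Rightarrow> ('a \<Rightarrow> 'a \<Rightarrow> 'a) \<Rightarrow> ('a \<Rightarrow> 'a list \<Rightarrow> bool) \<Rightarrow>
    ('a \<times> 'a set) set set" where
  "tcar M j S = cls M j S ` Pdom M"

definition tjoin :: "'a set \<Rightarrow> ('a \<Rightarrow> 'a \<Rightarrow> 'a) \<Rightarrow> ('a \<Rightarrow> 'a list \<Rightarrow> bool) \<Rightarrow>
    ('a \<times> 'a set) set \<Rightarrow> ('a \<times> 'a set) set \<Rightarrow> ('a \<times> 'a set) set" where
  "tjoin M j S X Y =
     {q. \<exists>p\<in>X. \<exists>p'\<in>Y. q \<in> cls M j S (j (fst p) (fst p'), snd p \<union> snd p')}"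

definition tK :: "'a set \<Rightarrow> ('a \<Rightarrow> 'a \<Rightarrow> 'a) \<Rightarrow> ('a \<Rightarrow> 'a list \<Rightarrow> bool) \<Rightarrow>
    ('a \<times> 'a set) set \<Rightarrow> ('a \<times> 'a set) set" where
  "tK M j S X = {q. \<exists>p\<in>X. q \<in> cls M j S (fst p, {jset j (fst p) (snd p)})}"

definition tS :: "'a set \<Rightarrow> ('a \<Rightarrow> 'a \<Rightarrow> 'a) \<Rightarrow> ('a \<Rightarrow> 'a list \<Rightarrow> bool) \<Rightarrow>
    ('a \<times> 'a set) set \<Rightarrow> ('a \<times> 'a set) set list \<Rightarrow> bool" where
  "tS M j S X Ys \<longleftrightarrow> X \<in> tcar M j S \<and> Ys \<noteq> [] \<and> set Ys \<subseteq> tcar M j S \<and>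
     sle (tjoin M j S) X (joinl (tjoin M j S) (map (tK M j S) Ys))"

definition ups :: "'a set \<Rightarrow> ('a \<Rightarrow> 'a \<Rightarrow> 'a) \<Rightarrow> ('a \<Rightarrow> 'a list \<Rightarrow> bool) \<Rightarrow>
    'a \<Rightarrow> ('a \<times> 'a set) set" where
  "ups M j S a = cls M j S (a, {})"

end

theory Submission
  imports Defs
begin

text \<open>
  The relation of the construction is a preorder on pairs \<open>(a, B)\<close> in which
  \<open>(a \<squnion> c, B \<union> D)\<close> is a least upper bound and \<open>(a, B) \<mapsto> (a, {a \<squnion> \<Squnion>B})\<close> is a
  closure operator; so the quotient is a semilattice with a closure operator \<open>K\<close>, and
  any such structure is principal and regular once \<open>x \<sqsubseteq> y\<^sub>1, \<dots>, y\<^sub>n\<close> is read as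
  \<open>x \<le> K y\<^sub>1 \<squnion> \<dots> \<squnion> K y\<^sub>n\<close>. Condition (a1) is handled by an induction principle: the
  elements \<open>a\<close> with \<open>a \<le> c \<squnion> d\<close> for some \<open>d \<sqsubseteq> D\<close> lie in every down-closed,
  join-closed set containing \<open>c\<close> and all \<open>d \<sqsubseteq> D\<close>.
  Every class is \<open>[a, B] = \<upsilon> a \<squnion> \<Squnion>\<^sub>b\<^sub>\<in>\<^sub>B K (\<upsilon> b)\<close>, so a \<open>K\<close>-homomorphism is determined
  by its values on \<open>\<upsilon>(M)\<close>, and \<open>\<eta>\<close> extends by \<open>[a, B] \<mapsto> \<eta> a \<squnion> \<Squnion>\<^sub>b\<^sub>\<in>\<^sub>B K (\<eta> b)\<close>.
  Part (4) is part (3) applied to \<open>\<upsilon>\<^sub>U \<circ> \<psi>\<close>.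
\<close>

lemma joinl_Cons: "xs \<noteq> [] \<Longrightarrow> joinl j (x # xs) = j x (joinl j xs)"
  by (cases xs) auto

locale join_semilattice =
  fixes M :: "'a set" and j :: "'a \<Rightarrow> 'a \<Rightarrow> 'a"
  assumes join_closed: "a \<in> M \<Longrightarrow> b \<in> M \<Longrightarrow> j a b \<in> M"
    and join_assoc: "a \<in> M \<Longrightarrow> b \<in> M \<Longrightarrow> c \<in> M \<Longrightarrow> j (j a b) c = j a (j b c)"
    and join_comm: "a \<in> M \<Longrightarrow> b \<in> M \<Longrightarrow> j a b = j b a"
    and join_idem: "a \<in> M \<Longrightarrow> j a a = a"
begin

abbreviation le :: "'a \<Rightarrow> 'a \<Rightarrow> bool" where
  "le a b \<equiv> sle j a b"

lemma le_refl: "a \<in> M \<Longrightarrow> le a a"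
  by (simp add: sle_def join_idem)

lemma le_trans: "a \<in> M \<Longrightarrow> b \<in> M \<Longrightarrow> c \<in> M \<Longrightarrow> le a b \<Longrightarrow> le b c \<Longrightarrow> le a c"
  unfolding sle_def by (metis join_assoc)

lemma le_antisym: "a \<in> M \<Longrightarrow> b \<in> M \<Longrightarrow> le a b \<Longrightarrow> le b a \<Longrightarrow> a = b"
  unfolding sle_def by (metis join_comm)

lemma join_le_iff: "a \<in> M \<Longrightarrow> b \<in> M \<Longrightarrow> c \<in> M \<Longrightarrow> le (j a b) c \<longleftrightarrow> le a c \<and> le b c"
  unfolding sle_def by (metis join_assoc join_comm join_idem join_closed)

lemma join_upper1: "a \<in> M \<Longrightarrow> b \<in> M \<Longrightarrow> le a (j a b)"
  using join_le_iff join_closed le_refl by blast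

lemma join_upper2: "a \<in> M \<Longrightarrow> b \<in> M \<Longrightarrow> le b (j a b)"
  using join_le_iff join_closed le_refl by blast

lemma join_least: "a \<in> M \<Longrightarrow> b \<in> M \<Longrightarrow> c \<in> M \<Longrightarrow> le a c \<Longrightarrow> le b c \<Longrightarrow> le (j a b) c"
  using join_le_iff by blast

lemma join_mono:
  "a \<in> M \<Longrightarrow> b \<in> M \<Longrightarrow> c \<in> M \<Longrightarrow> d \<in> M \<Longrightarrow> le a c \<Longrightarrow> le b d \<Longrightarrow> le (j a b) (j c d)"
  by (meson join_closed join_least join_upper1 join_upper2 le_trans)

lemma eq_if_same_upper_bounds:
  "a \<in> M \<Longrightarrow> b \<in> M \<Longrightarrow> (\<And>z. z \<in> M \<Longrightarrow> le a z \<longleftrightarrow> le b z) \<Longrightarrow> a = b"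
  using le_antisym le_refl by blast

lemma joinl_closed_le_iff:
  assumes "xs \<noteq> []" "set xs \<subseteq> M"
  shows "joinl j xs \<in> M \<and> (\<forall>z\<in>M. le (joinl j xs) z \<longleftrightarrow> (\<forall>x\<in>set xs. le x z))"
  using assms
proof (induction xs rule: list_nonempty_induct)
  case (cons x xs)
  then show ?case
    by (cases xs) (auto simp: join_closed join_le_iff)
qed simp

lemma joinl_closed: "xs \<noteq> [] \<Longrightarrow> set xs \<subseteq> M \<Longrightarrow> joinl j xs \<in> M"
  using joinl_closed_le_iff by blast

lemma joinl_le_iff:
  "xs \<noteq> [] \<Longrightarrow> set xs \<subseteq> M \<Longrightarrow> z \<in> M \<Longrightarrow> le (joinl j xs) z \<longleftrightarrow> (\<forall>x\<in>set xs. le x z)"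
  using joinl_closed_le_iff by blast

lemma joinl_upper: "xs \<noteq> [] \<Longrightarrow> set xs \<subseteq> M \<Longrightarrow> x \<in> set xs \<Longrightarrow> le x (joinl j xs)"
  using joinl_le_iff joinl_closed le_refl by blast

lemma joinl_induct:
  assumes "xs \<noteq> []" "set xs \<subseteq> M" "\<forall>x\<in>set xs. P x"
    and "\<And>x y. x \<in> M \<Longrightarrow> y \<in> M \<Longrightarrow> P x \<Longrightarrow> P y \<Longrightarrow> P (j x y)"
  shows "P (joinl j xs)"
  using assms(1-3)
proof (induction xs rule: list_nonempty_induct)
  case (cons x xs)
  then show ?case
    using assms(4)[of x "joinl j xs"] joinl_closed[of xs] joinl_Cons[of xs j x] by simp
qed simp

lemma foldr_closed_le_iff:
  assumes "set xs \<subseteq> M" "a \<in> M"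
  shows "foldr j xs a \<in> M \<and> (\<forall>z\<in>M. le (foldr j xs a) z \<longleftrightarrow> le a z \<and> (\<forall>x\<in>set xs. le x z))"
  using assms by (induction xs) (auto simp: join_closed join_le_iff)

lemma jset_foldr:
  assumes "finite B"
  obtains xs where "set xs = B" "jset j a B = foldr j xs a"
  using assms unfolding jset_def by (metis (mono_tags, lifting) finite_list someI_ex)

lemma jset_empty: "jset j a {} = a"
  unfolding jset_def by simp

lemma jset_closed: "finite B \<Longrightarrow> B \<subseteq> M \<Longrightarrow> a \<in> M \<Longrightarrow> jset j a B \<in> M"
  by (metis jset_foldr foldr_closed_le_iff)

lemma jset_le_iff:
  "finite B \<Longrightarrow> B \<subseteq> M \<Longrightarrow> a \<in> M \<Longrightarrow> z \<in> M \<Longrightarrow>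
    le (jset j a B) z \<longleftrightarrow> le a z \<and> (\<forall>b\<in>B. le b z)"
  by (metis jset_foldr foldr_closed_le_iff)

lemma jset_upper:
  assumes "finite B" "B \<subseteq> M" "a \<in> M"
  shows "le a (jset j a B)" and "b \<in> B \<Longrightarrow> le b (jset j a B)"
  using jset_le_iff[OF assms _] jset_closed[OF assms] le_refl by blast+

lemma jset_induct:
  assumes "finite B" "B \<subseteq> M" "a \<in> M" "P a" "\<forall>b\<in>B. P b"
    and "\<And>x y. x \<in> M \<Longrightarrow> y \<in> M \<Longrightarrow> P x \<Longrightarrow> P y \<Longrightarrow> P (j x y)"
  shows "P (jset j a B)"
proof -
  obtain xs where "set xs = B" "jset j a B = foldr j xs a"
    using jset_foldr[OF assms(1)] .
  moreover have "set xs \<subseteq> M \<Longrightarrow> \<forall>x\<in>set xs. P x \<Longrightarrow> P (foldr j xs a)" for xs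
    by (induction xs) (auto intro: assms(3,4,6) foldr_closed_le_iff[THEN conjunct1])
  ultimately show ?thesis using assms(2,5) by simp
qed

end

lemma joinl_hom:
  assumes "join_semilattice A jA" "\<And>x y. x \<in> A \<Longrightarrow> y \<in> A \<Longrightarrow> f (jA x y) = jB (f x) (f y)"
    and "xs \<noteq> []" "set xs \<subseteq> A"
  shows "f (joinl jA xs) = joinl jB (map f xs)"
  using assms(3,4)
proof (induction xs rule: list_nonempty_induct)
  case (cons x xs)
  then show ?case
    by (simp add: joinl_Cons assms(2) join_semilattice.joinl_closed[OF assms(1)])
qed simp


section \<open>Closure operators give regular structures\<close>

locale closure_semilattice = join_semilattice +
  fixes K :: "'a \<Rightarrow> 'a"
  assumes K_closed: "x \<in> M \<Longrightarrow> K x \<in> M"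
    and K_ext: "x \<in> M \<Longrightarrow> le x (K x)"
    and K_mono: "x \<in> M \<Longrightarrow> y \<in> M \<Longrightarrow> le x y \<Longrightarrow> le (K x) (K y)"
    and K_idem: "x \<in> M \<Longrightarrow> le (K (K x)) (K x)"
begin

lemma K_le_K: "x \<in> M \<Longrightarrow> y \<in> M \<Longrightarrow> le x (K y) \<Longrightarrow> le (K x) (K y)"
  by (meson K_closed K_idem K_mono le_trans)

lemma joinl_K_closed: "bs \<noteq> [] \<Longrightarrow> set bs \<subseteq> M \<Longrightarrow> joinl j (map K bs) \<in> M"
  using joinl_closed[of "map K bs"] K_closed by auto

lemma joinl_K_le:
  assumes "xs \<noteq> []" "set xs \<subseteq> M" "ys \<noteq> []" "set ys \<subseteq> M"
    and "\<forall>x\<in>set xs. \<exists>y\<in>set ys. le x (K y)"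
  shows "le (joinl j (map K xs)) (joinl j (map K ys))"
proof -
  have KysM: "set (map K ys) \<subseteq> M" and ne: "map K ys \<noteq> []"
    using assms(3,4) K_closed by auto
  have "le (K x) (joinl j (map K ys))" if "x \<in> set xs" for x
  proof -
    obtain y where y: "y \<in> set ys" "le x (K y)" using assms(5) \<open>x \<in> set xs\<close> by blast
    have "le (K x) (K y)" using K_le_K y assms(2,4) that by blast
    moreover have "le (K y) (joinl j (map K ys))" using joinl_upper[OF ne KysM] y(1) by simp
    ultimately show ?thesis
      using le_trans K_closed joinl_closed[OF ne KysM] assms(2,4) that y(1) by blast
  qed
  moreover have "set (map K xs) \<subseteq> M" using assms(2) K_closed by auto
  ultimately show ?thesis
    using assms(1) joinl_le_iff[of "map K xs"] joinl_closed[OF ne KysM] by simp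
qed

context
  fixes S :: "'a \<Rightarrow> 'a list \<Rightarrow> bool"
  assumes S_iff: "\<And>a bs. S a bs \<longleftrightarrow> a \<in> M \<and> bs \<noteq> [] \<and> set bs \<subseteq> M \<and> le a (joinl j (map K bs))"
begin

lemma S_single_iff: "S a [b] \<longleftrightarrow> a \<in> M \<and> b \<in> M \<and> le a (K b)"
  by (simp add: S_iff)

lemma S_weaken:
  assumes "S a xs" "ys \<noteq> []" "set ys \<subseteq> M" "\<forall>x\<in>set xs. \<exists>y\<in>set ys. le x (K y)"
  shows "S a ys"
proof -
  have xs: "a \<in> M" "xs \<noteq> []" "set xs \<subseteq> M" "le a (joinl j (map K xs))"
    using assms(1) S_iff by auto
  have "set (map K xs) \<subseteq> M" "set (map K ys) \<subseteq> M" using xs(3) assms(3) K_closed by auto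
  then show ?thesis
    using le_trans[OF xs(1) _ _ xs(4) joinl_K_le[OF xs(2,3) assms(2-4)]] joinl_closed xs assms(2,3)
    unfolding S_iff by simp
qed

lemma S_superset:
  assumes "S a xs" "set xs \<subseteq> set ys" "set ys \<subseteq> M"
  shows "S a ys"
proof (rule S_weaken[OF assms(1)])
  show "ys \<noteq> []" using assms(1,2) by (auto simp: S_iff)
  show "\<forall>x\<in>set xs. \<exists>y\<in>set ys. le x (K y)" using assms(2,3) K_ext by blast
qed (use assms(3) in simp)

lemma mass_of_closure: "mass M j S"
  unfolding mass_def
proof (intro conjI)
  show "\<forall>a b bs c. S a (b # bs) \<and> S b [c] \<longrightarrow> S a (c # bs)"
  proof (intro allI impI, elim conjE)
    fix a b bs c assume abs: "S a (b # bs)" and bc: "S b [c]"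
    have "\<forall>x\<in>set bs. le x (K x)" using abs S_iff K_ext by auto
    then have "\<forall>x\<in>set (b # bs). \<exists>y\<in>set (c # bs). le x (K y)"
      using bc S_single_iff by fastforce
    moreover have "set (c # bs) \<subseteq> M" using abs bc S_iff by auto
    ultimately show "S a (c # bs)" using S_weaken[OF abs, of "c # bs"] by blast
  qed
  show "\<forall>a\<in>M. \<forall>b cs. le a b \<and> S b cs \<longrightarrow> S a cs"
  proof (intro ballI allI impI, elim conjE)
    fix a b cs assume "a \<in> M" "le a b" "S b cs"
    moreover have "joinl j (map K cs) \<in> M" using \<open>S b cs\<close> joinl_K_closed by (simp add: S_iff)
    ultimately show "S a cs" using le_trans[of a b "joinl j (map K cs)"] by (simp add: S_iff)
  qed
  show "\<forall>a a1 bs. S a bs \<and> S a1 bs \<longrightarrow> S (j a a1) bs"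
  proof (intro allI impI, elim conjE)
    fix a a1 bs assume "S a bs" "S a1 bs"
    moreover have "joinl j (map K bs) \<in> M" using \<open>S a bs\<close> S_iff joinl_K_closed by auto
    ultimately show "S (j a a1) bs" using S_iff join_closed join_least by auto
  qed
  show "\<forall>a bs bs'. S a bs \<and> mset bs' = mset bs \<longrightarrow> S a bs'"
  proof (intro allI impI, elim conjE)
    fix a bs bs' assume "S a bs" "mset bs' = mset bs"
    then show "S a bs'" using S_superset[of a bs bs'] S_iff by (metis order_refl set_mset_mset)
  qed
  show "\<forall>a bs b. S a (bs @ [b, b]) \<longrightarrow> S a (bs @ [b])"
  proof (intro allI impI)
    fix a bs b assume "S a (bs @ [b, b])"
    moreover have "set (bs @ [b, b]) = set (bs @ [b])" by simp
    ultimately show "S a (bs @ [b])" using S_superset S_iff by (metis order_refl)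
  qed
  show "\<forall>a bs b. S a bs \<and> b \<in> M \<longrightarrow> S a (bs @ [b])"
  proof (intro allI impI, elim conjE)
    fix a bs b assume abs: "S a bs" and "b \<in> M"
    then have "set (bs @ [b]) \<subseteq> M" using S_iff by simp
    then show "S a (bs @ [b])" by (rule S_superset[OF abs, rotated]) auto
  qed
  show "\<forall>a\<in>M. S a [a]"
    by (simp add: S_single_iff K_ext)
  show "\<forall>a bs. S a bs \<longrightarrow> a \<in> M \<and> bs \<noteq> [] \<and> set bs \<subseteq> M"
    by (simp add: S_iff)
  show "\<forall>a\<in>M. \<forall>b\<in>M. j a b \<in> M" by (simp add: join_closed)
  show "\<forall>a\<in>M. \<forall>b\<in>M. \<forall>c\<in>M. j (j a b) c = j a (j b c)" by (simp add: join_assoc)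
  show "\<forall>a\<in>M. \<forall>b\<in>M. j a b = j b a" by (metis join_comm)
  show "\<forall>a\<in>M. j a a = a" by (simp add: join_idem)
qed

lemma K_S_single: "x \<in> M \<Longrightarrow> S (K x) [x]"
  by (simp add: S_single_iff K_closed le_refl)

lemma Kop_of_closure:
  assumes "x \<in> M"
  shows "Kop M j S x = K x"
  unfolding Kop_def
proof (rule the_equality)
  show "K x \<in> M \<and> S (K x) [x] \<and> (\<forall>z\<in>M. S z [x] \<longrightarrow> le z (K x))"
    using assms K_closed K_S_single by (simp add: S_single_iff)
  show "y = K x" if y: "y \<in> M \<and> S y [x] \<and> (\<forall>z\<in>M. S z [x] \<longrightarrow> le z y)" for y
  proof (rule le_antisym)
    show "le y (K x)" using y by (simp add: S_single_iff)
    show "le (K x) y" using y assms K_closed K_S_single by blast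
  qed (use y assms K_closed in auto)
qed

lemma regular_of_closure: "regular M j S"
proof -
  have "principal M j S"
    unfolding principal_def using mass_of_closure K_closed K_S_single Kop_of_closure
    by (metis S_single_iff)
  moreover have "S a bs \<longleftrightarrow> a \<in> M \<and> bs \<noteq> [] \<and> set bs \<subseteq> M \<and> le a (joinl j (map (Kop M j S) bs))"
    for a bs
  proof (cases "set bs \<subseteq> M")
    case True
    then have "map (Kop M j S) bs = map K bs" using Kop_of_closure by (simp add: subset_iff)
    then show ?thesis using S_iff[of a bs] by (simp only:)
  qed (use S_iff[of a bs] in simp)
  ultimately show ?thesis unfolding regular_def by blast
qed

end

end


lemma mass_join_semilattice:
  assumes "mass M j S"
  shows "join_semilattice M j"
proof -
  have closed: "\<forall>a\<in>M. \<forall>b\<in>M. j a b \<in> M"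
    using assms unfolding mass_def by (elim conjE) assumption
  have assoc: "\<forall>a\<in>M. \<forall>b\<in>M. \<forall>c\<in>M. j (j a b) c = j a (j b c)"
    using assms unfolding mass_def by (elim conjE) assumption
  have comm: "\<forall>a\<in>M. \<forall>b\<in>M. j a b = j b a"
    using assms unfolding mass_def by (elim conjE) assumption
  have idem: "\<forall>a\<in>M. j a a = a"
    using assms unfolding mass_def by (elim conjE) assumption
  show ?thesis
  proof
    show "j a b \<in> M" if "a \<in> M" "b \<in> M" for a b using closed that by blast
    show "j (j a b) c = j a (j b c)" if "a \<in> M" "b \<in> M" "c \<in> M" for a b c using assoc that by blast
    show "j a b = j b a" if "a \<in> M" "b \<in> M" for a b using comm that by blast
    show "j a a = a" if "a \<in> M" for a using idem that by blast
  qed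
qed

locale spec_semilattice =
  fixes M :: "'a set" and j :: "'a \<Rightarrow> 'a \<Rightarrow> 'a" and S :: "'a \<Rightarrow> 'a list \<Rightarrow> bool"
  assumes mass: "mass M j S"
begin

sublocale join_semilattice M j
  using mass by (rule mass_join_semilattice)

lemma S_dom: "S a bs \<Longrightarrow> a \<in> M \<and> bs \<noteq> [] \<and> set bs \<subseteq> M"
  using mass unfolding mass_def by (elim conjE) fast

lemma S_refl: "a \<in> M \<Longrightarrow> S a [a]"
  using mass unfolding mass_def by (elim conjE) fast

lemma S_replace_head: "S a (b # bs) \<Longrightarrow> S b [c] \<Longrightarrow> S a (c # bs)"
  using mass unfolding mass_def by (elim conjE) fast

lemma S_down: "a \<in> M \<Longrightarrow> le a b \<Longrightarrow> S b cs \<Longrightarrow> S a cs"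
  using mass unfolding mass_def by (elim conjE) fast

lemma S_perm: "S a bs \<Longrightarrow> mset bs' = mset bs \<Longrightarrow> S a bs'"
  using mass unfolding mass_def by (elim conjE) fast

lemma S_contract: "S a (bs @ [b, b]) \<Longrightarrow> S a (bs @ [b])"
  using mass unfolding mass_def by (elim conjE) fast

lemma S_snoc: "S a bs \<Longrightarrow> b \<in> M \<Longrightarrow> S a (bs @ [b])"
  using mass unfolding mass_def by (elim conjE) fast

lemma S_join: "S a bs \<Longrightarrow> S a' bs \<Longrightarrow> S (j a a') bs"
  using mass unfolding mass_def by (elim conjE) fast

lemma S_single_trans: "S a [b] \<Longrightarrow> S b [c] \<Longrightarrow> S a [c]"
  using S_replace_head[of a b "[]" c] by simp

lemma S_single_of_le: "a \<in> M \<Longrightarrow> b \<in> M \<Longrightarrow> le a b \<Longrightarrow> S a [b]"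
  using S_down S_refl by blast

lemma S_append: "S a xs \<Longrightarrow> set ys \<subseteq> M \<Longrightarrow> S a (xs @ ys)"
proof (induction ys arbitrary: xs)
  case (Cons y ys)
  have "S a (xs @ [y])" using S_snoc Cons.prems by simp
  then have "S a ((xs @ [y]) @ ys)" using Cons.IH[of "xs @ [y]"] Cons.prems(2) by simp
  then show ?case by simp
qed simp

lemma S_drop_duplicates: "S a (xs @ ys) \<Longrightarrow> set xs \<subseteq> set ys \<Longrightarrow> S a ys"
proof (induction xs)
  case (Cons x xs)
  let ?r = "remove1 x (xs @ ys)"
  have x: "x \<in> set (xs @ ys)" using Cons.prems(2) by auto
  then have "S a (?r @ [x, x])" using S_perm[OF Cons.prems(1)] by simp
  then have "S a (?r @ [x])" by (rule S_contract)
  moreover have "mset (xs @ ys) = mset (?r @ [x])" using x by simp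
  ultimately have "S a (xs @ ys)" by (rule S_perm)
  then show ?case using Cons by simp
qed simp

lemma S_superset: "S a xs \<Longrightarrow> set xs \<subseteq> set ys \<Longrightarrow> set ys \<subseteq> M \<Longrightarrow> S a ys"
  using S_append[of a xs ys] S_drop_duplicates[of a xs ys] by simp

lemma S_elem: "x \<in> set ys \<Longrightarrow> set ys \<subseteq> M \<Longrightarrow> S x ys"
  using S_superset[OF S_refl[of x], of ys] by auto

lemma S_replace:
  "S a (xs @ zs) \<Longrightarrow> \<forall>x\<in>set xs. \<exists>y\<in>E. S x [y] \<Longrightarrow> \<exists>ys. set ys \<subseteq> E \<and> S a (ys @ zs)"
proof (induction xs arbitrary: zs)
  case Nil
  then show ?case by (intro exI[of _ "[]"]) simp
next
  case (Cons x xs)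
  obtain y where y: "y \<in> E" "S x [y]" using Cons.prems(2) by auto
  have "S a (y # xs @ zs)" using S_replace_head Cons.prems(1) y(2) by simp
  then have "S a (xs @ zs @ [y])" by (rule S_perm) simp
  then obtain ys where ys: "set ys \<subseteq> E" "S a (ys @ zs @ [y])"
    using Cons.IH Cons.prems(2) by force
  from ys(2) have "S a ((ys @ [y]) @ zs)" by (rule S_perm) (simp add: ac_simps)
  then show ?case using ys(1) y(1) by (intro exI[of _ "ys @ [y]"]) simp
qed

lemma S_cut:
  assumes "S a xs" "\<forall>x\<in>set xs. \<exists>y\<in>set es. S x [y]" "set es \<subseteq> M"
  shows "S a es"
proof -
  obtain ys where "set ys \<subseteq> set es" "S a ys"
    using S_replace[of a xs "[]" "set es"] assms(1,2) by auto
  then show ?thesis using S_superset assms(3) by blast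
qed

lemma regular_closure_semilattice:
  assumes "regular M j S"
  shows "closure_semilattice M j (Kop M j S)"
proof -
  let ?K = "Kop M j S"
  have principal: "principal M j S"
    using assms unfolding regular_def by (rule conjunct1)
  have K: "?K x \<in> M \<and> S (?K x) [x] \<and> (\<forall>z\<in>M. S z [x] \<longrightarrow> le z (?K x))" if "x \<in> M" for x
  proof -
    obtain y where y: "y \<in> M" "S y [x]" "\<forall>z\<in>M. S z [x] \<longrightarrow> le z y"
      using principal \<open>x \<in> M\<close> unfolding principal_def by blast
    have "?K x = y"
      unfolding Kop_def
    proof (rule the_equality)
      show "y \<in> M \<and> S y [x] \<and> (\<forall>z\<in>M. S z [x] \<longrightarrow> le z y)" using y by blast
      show "y' = y" if "y' \<in> M \<and> S y' [x] \<and> (\<forall>z\<in>M. S z [x] \<longrightarrow> le z y')" for y'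
        using that y by (meson le_antisym)
    qed
    then show ?thesis using y by simp
  qed
  have K_greatest: "le z (?K x)" if "S z [x]" for z x
    using K[of x] S_dom[OF that] that by auto
  have K_le_K: "le (?K x) (?K y)" if "x \<in> M" "y \<in> M" "le x (?K y)" for x y
  proof -
    have "S x [?K y]" using S_single_of_le K that by blast
    then have "S x [y]" using S_single_trans K \<open>y \<in> M\<close> by blast
    then have "S (?K x) [y]" using S_single_trans K \<open>x \<in> M\<close> by blast
    then show ?thesis by (rule K_greatest)
  qed
  show ?thesis
  proof
    fix x y assume x: "x \<in> M" and y: "y \<in> M"
    show "?K x \<in> M" using K x by blast
    show "le x (?K x)" using K_greatest S_refl x by blast
    then show "le (?K (?K x)) (?K x)" using K_le_K K le_refl x by blast
    show "le (?K x) (?K y)" if "le x y"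
      using K_le_K[OF x y] le_trans[OF x y] K_greatest S_refl K y that by blast
  qed
qed

lemma regular_S_iff:
  "regular M j S \<Longrightarrow> S a bs \<longleftrightarrow> a \<in> M \<and> bs \<noteq> [] \<and> set bs \<subseteq> M \<and> le a (joinl j (map (Kop M j S) bs))"
  unfolding regular_def by blast

section \<open>The preorder on pairs and its quotient\<close>

definition Sset :: "'a \<Rightarrow> 'a set \<Rightarrow> bool" where
  "Sset d D \<longleftrightarrow> (\<exists>ds. set ds = D \<and> distinct ds \<and> S d ds)"

lemma Sset_iff: "set ds = D \<Longrightarrow> Sset d D \<longleftrightarrow> S d ds"
proof
  assume "set ds = D" "Sset d D"
  then obtain es where "set es = set ds" "S d es" unfolding Sset_def by blast
  then show "S d ds" using S_superset S_dom by (metis order_refl)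
next
  assume D: "set ds = D" and "S d ds"
  then have "S d (remdups ds)" using S_superset S_dom by (metis set_remdups order_refl)
  then show "Sset d D" unfolding Sset_def using D by (intro exI[of _ "remdups ds"]) simp
qed

lemma Sset_dom: "Sset d D \<Longrightarrow> d \<in> M \<and> D \<noteq> {} \<and> D \<subseteq> M \<and> finite D"
  unfolding Sset_def using S_dom by auto

lemma Sset_elem: "finite D \<Longrightarrow> D \<subseteq> M \<Longrightarrow> x \<in> D \<Longrightarrow> Sset x D"
  using S_elem Sset_iff by (metis finite_list)

lemma Sset_single: "Sset a {b} \<longleftrightarrow> S a [b]"
  using Sset_iff[of "[b]"] by simp

lemma Sset_join:
  assumes "Sset a D" "Sset b D"
  shows "Sset (j a b) D"
proof -
  obtain ds where ds: "set ds = D" "S a ds" using assms(1) unfolding Sset_def by blast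
  then have "S b ds" using assms(2) Sset_iff by simp
  then show ?thesis using S_join[OF ds(2)] Sset_iff[OF ds(1)] by simp
qed

lemma Sset_cut:
  assumes "Sset a D" "\<forall>x\<in>D. \<exists>y\<in>E. S x [y]" "finite E" "E \<subseteq> M"
  shows "Sset a E"
proof -
  obtain ds where ds: "set ds = D" "S a ds" using assms(1) unfolding Sset_def by blast
  obtain es where es: "set es = E" using assms(3) finite_list by blast
  have "S a es" using S_cut[OF ds(2)] assms(2,4) ds(1) es by auto
  then show ?thesis using Sset_iff[OF es] by simp
qed

text \<open>Condition (a1) of the construction; the case \<open>D = {}\<close> is the empty join.\<close>

definition le_spec :: "'a \<Rightarrow> 'a \<Rightarrow> 'a set \<Rightarrow> bool" where
  "le_spec a c D \<longleftrightarrow> (if D = {} then le a c else \<exists>d\<in>M. Sset d D \<and> le a (j c d))"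

lemma prec_iff:
  "prec M j S p q \<longleftrightarrow> le_spec (fst p) (fst q) (snd q) \<and> (\<forall>b\<in>snd p. \<exists>d\<in>snd q. S b [d])"
  unfolding prec_def le_spec_def Sset_def by auto

lemma le_spec_of_le:
  assumes "a \<in> M" "c \<in> M" "finite D" "D \<subseteq> M" "le a c"
  shows "le_spec a c D"
proof (cases "D = {}")
  case False
  then obtain x where "x \<in> D" by blast
  then have "x \<in> M" "Sset x D" using Sset_elem assms(3,4) by auto
  moreover have "le a (j c x)"
    using le_trans[OF assms(1,2) _ assms(5) join_upper1] join_closed assms(2) \<open>x \<in> M\<close> by blast
  ultimately show ?thesis unfolding le_spec_def using False by auto
qed (use assms in \<open>simp add: le_spec_def\<close>)

lemma le_spec_of_Sset: "c \<in> M \<Longrightarrow> Sset d D \<Longrightarrow> le_spec d c D"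
  unfolding le_spec_def using Sset_dom join_upper2 by auto

lemma le_spec_down:
  assumes "a \<in> M" "a' \<in> M" "c \<in> M" "le a a'" "le_spec a' c D"
  shows "le_spec a c D"
proof (cases "D = {}")
  case True
  then show ?thesis using assms le_trans[of a a' c] unfolding le_spec_def by simp
next
  case False
  then obtain d where "d \<in> M" "Sset d D" "le a' (j c d)" using assms(5) unfolding le_spec_def by auto
  moreover have "le a (j c d)"
    using le_trans[OF assms(1,2) join_closed[OF assms(3) \<open>d \<in> M\<close>] assms(4) \<open>le a' (j c d)\<close>] .
  ultimately show ?thesis using False unfolding le_spec_def by auto
qed

lemma le_spec_join:
  assumes "a \<in> M" "a' \<in> M" "c \<in> M" "le_spec a c D" "le_spec a' c D"
  shows "le_spec (j a a') c D"
proof (cases "D = {}")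
  case False
  then obtain d d' where d: "d \<in> M" "Sset d D" "le a (j c d)"
    and d': "d' \<in> M" "Sset d' D" "le a' (j c d')"
    using assms(4,5) unfolding le_spec_def by auto
  have dd': "j d d' \<in> M" "j c (j d d') \<in> M" using d d' assms(3) join_closed by auto
  have "le (j c d) (j c (j d d'))"
    using join_mono[OF assms(3) d(1) assms(3) dd'(1) le_refl[OF assms(3)] join_upper1[OF d(1) d'(1)]] .
  then have "le a (j c (j d d'))"
    using le_trans[OF assms(1) _ dd'(2) d(3)] join_closed[OF assms(3) d(1)] by blast
  have "le (j c d') (j c (j d d'))"
    using join_mono[OF assms(3) d'(1) assms(3) dd'(1) le_refl[OF assms(3)] join_upper2[OF d(1) d'(1)]] .
  then have "le a' (j c (j d d'))"
    using le_trans[OF assms(2) _ dd'(2) d'(3)] join_closed[OF assms(3) d'(1)] by blast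
  then have "le (j a a') (j c (j d d'))"
    using join_least[OF assms(1,2) dd'(2) \<open>le a (j c (j d d'))\<close>] by blast
  then show ?thesis unfolding le_spec_def using False dd' Sset_join d(2) d'(2) by auto
qed (use assms join_least in \<open>simp add: le_spec_def\<close>)

lemma le_spec_induct:
  assumes "le_spec a c D" "a \<in> M" "c \<in> M"
    and "P c" "\<And>d. Sset d D \<Longrightarrow> P d"
    and down: "\<And>x y. x \<in> M \<Longrightarrow> y \<in> M \<Longrightarrow> le x y \<Longrightarrow> P y \<Longrightarrow> P x"
    and join: "\<And>x y. x \<in> M \<Longrightarrow> y \<in> M \<Longrightarrow> P x \<Longrightarrow> P y \<Longrightarrow> P (j x y)"
  shows "P a"
proof (cases "D = {}")
  case True
  then show ?thesis using assms(1-4) down unfolding le_spec_def by auto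
next
  case False
  then obtain d where "d \<in> M" "Sset d D" "le a (j c d)"
    using assms(1) unfolding le_spec_def by auto
  then show ?thesis using down[of a "j c d"] join[of c d] assms(2-5) join_closed by auto
qed

abbreviation P :: "('a \<times> 'a set) set" where
  "P \<equiv> Pdom M"

abbreviation precsim :: "'a \<times> 'a set \<Rightarrow> 'a \<times> 'a set \<Rightarrow> bool" (infix "\<preceq>" 50) where
  "p \<preceq> q \<equiv> prec M j S p q"

lemma Pdom_iff [simp]: "(a, B) \<in> P \<longleftrightarrow> a \<in> M \<and> B \<subseteq> M \<and> finite B"
  by (simp add: Pdom_def)

definition pjoin :: "'a \<times> 'a set \<Rightarrow> 'a \<times> 'a set \<Rightarrow> 'a \<times> 'a set" where
  "pjoin p q = (j (fst p) (fst q), snd p \<union> snd q)"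

definition pK :: "'a \<times> 'a set \<Rightarrow> 'a \<times> 'a set" where
  "pK p = (fst p, {jset j (fst p) (snd p)})"

lemma pjoin_in_Pdom: "p \<in> P \<Longrightarrow> q \<in> P \<Longrightarrow> pjoin p q \<in> P"
  unfolding pjoin_def Pdom_def using join_closed by auto

lemma pK_in_Pdom: "p \<in> P \<Longrightarrow> pK p \<in> P"
  unfolding pK_def Pdom_def using jset_closed by auto

lemma spec_cover_subset: "B \<subseteq> C \<Longrightarrow> C \<subseteq> M \<Longrightarrow> \<forall>b\<in>B. \<exists>d\<in>C. S b [d]"
  using S_refl by blast

lemma S_single_jset:
  assumes "finite B" "B \<subseteq> M" "a \<in> M"
  shows "S a [jset j a B]" and "b \<in> B \<Longrightarrow> S b [jset j a B]"
  using S_single_of_le jset_closed jset_upper assms by (blast, meson subsetD)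

lemma prec_refl: "p \<in> P \<Longrightarrow> p \<preceq> p"
  unfolding prec_iff Pdom_def using le_spec_of_le le_refl spec_cover_subset[of "snd p" "snd p"] by auto

lemma prec_trans:
  assumes "p \<in> P" "q \<in> P" "r \<in> P" "p \<preceq> q" "q \<preceq> r"
  shows "p \<preceq> r"
proof -
  obtain a B c D e F where pqr: "p = (a, B)" "q = (c, D)" "r = (e, F)"
    by (metis surj_pair)
  have M: "a \<in> M" "c \<in> M" "e \<in> M" "finite F" "F \<subseteq> M" using assms(1-3) pqr by auto
  have pq: "le_spec a c D" "\<forall>b\<in>B. \<exists>d\<in>D. S b [d]" using assms(4) pqr prec_iff by auto
  have qr: "le_spec c e F" "\<forall>b\<in>D. \<exists>d\<in>F. S b [d]" using assms(5) pqr prec_iff by auto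
  have "le_spec a e F"
  proof (rule le_spec_induct[where P = "\<lambda>x. le_spec x e F", OF pq(1) M(1,2) qr(1)])
    show "le_spec d e F" if "Sset d D" for d
      using Sset_cut[OF that qr(2) M(4,5)] le_spec_of_Sset M(3) by blast
  qed (use le_spec_down le_spec_join M(3) in blast)+
  moreover have "\<forall>b\<in>B. \<exists>d\<in>F. S b [d]" using pq(2) qr(2) S_single_trans by blast
  ultimately show ?thesis using pqr prec_iff by simp
qed

lemma prec_pjoin_upper1: "p \<in> P \<Longrightarrow> q \<in> P \<Longrightarrow> p \<preceq> pjoin p q"
  unfolding prec_iff pjoin_def Pdom_def
  using le_spec_of_le join_closed join_upper1 spec_cover_subset[of "snd p" "snd p \<union> snd q"] by auto

lemma prec_pjoin_upper2: "p \<in> P \<Longrightarrow> q \<in> P \<Longrightarrow> q \<preceq> pjoin p q"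
  unfolding prec_iff pjoin_def Pdom_def
  using le_spec_of_le join_closed join_upper2 spec_cover_subset[of "snd q" "snd p \<union> snd q"] by auto

lemma prec_pjoin_least: "p \<in> P \<Longrightarrow> q \<in> P \<Longrightarrow> r \<in> P \<Longrightarrow> p \<preceq> r \<Longrightarrow> q \<preceq> r \<Longrightarrow> pjoin p q \<preceq> r"
  unfolding prec_iff pjoin_def Pdom_def using le_spec_join by auto

lemma prec_pK_ext: "p \<in> P \<Longrightarrow> p \<preceq> pK p"
  unfolding prec_iff pK_def Pdom_def
  using le_spec_of_le le_refl jset_closed S_single_jset(2) by auto

lemma prec_pK_mono:
  assumes "p \<in> P" "q \<in> P" "p \<preceq> q"
  shows "pK p \<preceq> pK q"
proof -
  obtain a B c D where pq: "p = (a, B)" "q = (c, D)" by (metis surj_pair)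
  have M: "a \<in> M" "B \<subseteq> M" "finite B" "c \<in> M" "D \<subseteq> M" "finite D" using assms(1,2) pq by auto
  have le: "le_spec a c D" "\<forall>b\<in>B. \<exists>d\<in>D. S b [d]" using assms(3) pq prec_iff by auto
  define w where "w = jset j c D"
  have w: "w \<in> M" "S c [w]" "\<forall>d\<in>D. S d [w]"
    using jset_closed S_single_jset M(4-6) unfolding w_def by auto
  have "S a [w]"
  proof (rule le_spec_induct[where P = "\<lambda>x. S x [w]", OF le(1) M(1,4) w(2)])
    show "S d [w]" if "Sset d D" for d
      using Sset_cut[OF that, of "{w}"] w(1,3) Sset_single by blast
  qed (use S_down S_join in blast)+
  then have "le_spec a c {w}" using le_spec_of_Sset M(4) Sset_single by blast
  moreover have "S (jset j a B) [w]"
    using jset_induct[OF M(3,2,1), where P = "\<lambda>x. S x [w]"] \<open>S a [w]\<close> le(2) w(3) S_single_trans S_join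
    by blast
  ultimately show ?thesis unfolding prec_iff pK_def pq w_def by simp
qed

lemma prec_pK_idem: "p \<in> P \<Longrightarrow> pK (pK p) \<preceq> pK p"
proof -
  assume "p \<in> P"
  obtain a B where p: "p = (a, B)" by (metis surj_pair)
  define w where "w = jset j a B"
  have M: "a \<in> M" "w \<in> M" "le a w" using \<open>p \<in> P\<close> jset_closed jset_upper unfolding p w_def by auto
  have "S (jset j a {w}) [w]"
    using jset_induct[of "{w}" a "\<lambda>x. S x [w]"] M S_single_of_le S_refl S_join by auto
  then show ?thesis
    unfolding prec_iff pK_def p using le_spec_of_le M le_refl w_def by auto
qed

lemma prec_pjoin_mono:
  assumes "p \<in> P" "q \<in> P" "p' \<in> P" "q' \<in> P" "p \<preceq> p'" "q \<preceq> q'"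
  shows "pjoin p q \<preceq> pjoin p' q'"
  using prec_pjoin_least[OF assms(1,2) pjoin_in_Pdom[OF assms(3,4)]]
    prec_trans[OF assms(1,3) pjoin_in_Pdom[OF assms(3,4)] assms(5) prec_pjoin_upper1[OF assms(3,4)]]
    prec_trans[OF assms(2,4) pjoin_in_Pdom[OF assms(3,4)] assms(6) prec_pjoin_upper2[OF assms(3,4)]]
  by blast

abbreviation cl :: "'a \<times> 'a set \<Rightarrow> ('a \<times> 'a set) set" where
  "cl \<equiv> cls M j S"

abbreviation Mt :: "('a \<times> 'a set) set set" where
  "Mt \<equiv> tcar M j S"

abbreviation jt :: "('a \<times> 'a set) set \<Rightarrow> ('a \<times> 'a set) set \<Rightarrow> ('a \<times> 'a set) set" where
  "jt \<equiv> tjoin M j S"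

abbreviation Kt :: "('a \<times> 'a set) set \<Rightarrow> ('a \<times> 'a set) set" where
  "Kt \<equiv> tK M j S"

abbreviation St :: "('a \<times> 'a set) set \<Rightarrow> ('a \<times> 'a set) set list \<Rightarrow> bool" where
  "St \<equiv> tS M j S"

lemma cls_self: "p \<in> P \<Longrightarrow> p \<in> cl p"
  unfolding cls_def using prec_refl by simp

lemma cls_eq_iff:
  assumes "p \<in> P" "q \<in> P"
  shows "cl p = cl q \<longleftrightarrow> p \<preceq> q \<and> q \<preceq> p"
proof
  assume "cl p = cl q"
  then show "p \<preceq> q \<and> q \<preceq> p" using cls_self[OF assms(1)] unfolding cls_def by auto
next
  assume pq: "p \<preceq> q \<and> q \<preceq> p"
  show "cl p = cl q"
    unfolding cls_def
  proof (rule Collect_cong)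
    fix r
    show "(r \<in> P \<and> r \<preceq> p \<and> p \<preceq> r) \<longleftrightarrow> (r \<in> P \<and> r \<preceq> q \<and> q \<preceq> r)"
      using prec_trans[of r p q] prec_trans[of r q p] prec_trans[of p q r] prec_trans[of q p r]
        assms pq by blast
  qed
qed

lemma tcar_cases:
  assumes "X \<in> Mt"
  obtains p where "p \<in> P" "X = cl p"
  using assms unfolding tcar_def by blast

lemma cls_in_tcar: "p \<in> P \<Longrightarrow> cl p \<in> Mt"
  unfolding tcar_def by blast

lemma tjoin_cls:
  assumes "p \<in> P" "q \<in> P"
  shows "jt (cl p) (cl q) = cl (pjoin p q)"
proof -
  have "cl (j (fst p') (fst q'), snd p' \<union> snd q') = cl (pjoin p q)"
    if "p' \<in> cl p" "q' \<in> cl q" for p' q'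
  proof -
    have h: "p' \<in> P" "p' \<preceq> p" "p \<preceq> p'" "q' \<in> P" "q' \<preceq> q" "q \<preceq> q'"
      using that unfolding cls_def by auto
    then have "cl (pjoin p' q') = cl (pjoin p q)"
      using cls_eq_iff pjoin_in_Pdom prec_pjoin_mono assms by simp
    then show ?thesis unfolding pjoin_def by simp
  qed
  moreover have "(j (fst p) (fst q), snd p \<union> snd q) = pjoin p q" by (simp add: pjoin_def)
  ultimately show ?thesis unfolding tjoin_def using cls_self assms by blast
qed

lemma tK_cls:
  assumes "p \<in> P"
  shows "Kt (cl p) = cl (pK p)"
proof -
  have "cl (fst p', {jset j (fst p') (snd p')}) = cl (pK p)" if "p' \<in> cl p" for p'
  proof -
    have h: "p' \<in> P" "p' \<preceq> p" "p \<preceq> p'" using that unfolding cls_def by auto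
    then have "cl (pK p') = cl (pK p)"
      using cls_eq_iff pK_in_Pdom prec_pK_mono assms by simp
    then show ?thesis unfolding pK_def by simp
  qed
  moreover have "(fst p, {jset j (fst p) (snd p)}) = pK p" by (simp add: pK_def)
  ultimately show ?thesis unfolding tK_def using cls_self assms by blast
qed

lemma tle_cls:
  assumes "p \<in> P" "q \<in> P"
  shows "sle jt (cl p) (cl q) \<longleftrightarrow> p \<preceq> q"
proof -
  have "sle jt (cl p) (cl q) \<longleftrightarrow> pjoin p q \<preceq> q \<and> q \<preceq> pjoin p q"
    unfolding sle_def tjoin_cls[OF assms] using cls_eq_iff pjoin_in_Pdom assms by simp
  also have "\<dots> \<longleftrightarrow> p \<preceq> q"
    using prec_trans[OF assms(1) pjoin_in_Pdom[OF assms] assms(2) prec_pjoin_upper1[OF assms]]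
      prec_pjoin_least[OF assms assms(2) _ prec_refl[OF assms(2)]] prec_pjoin_upper2[OF assms]
    by blast
  finally show ?thesis .
qed

lemma tcar_join_semilattice: "join_semilattice Mt jt"
proof
  fix X Y Z assume X: "X \<in> Mt" and Y: "Y \<in> Mt" and Z: "Z \<in> Mt"
  obtain p q r where pqr: "p \<in> P" "q \<in> P" "r \<in> P" and XYZ: "X = cl p" "Y = cl q" "Z = cl r"
    using tcar_cases X Y Z by metis
  have M: "fst p \<in> M" "fst q \<in> M" "fst r \<in> M" using pqr unfolding Pdom_def by auto
  show "jt X Y \<in> Mt" using tjoin_cls cls_in_tcar pjoin_in_Pdom pqr XYZ by simp
  have "pjoin p q = pjoin q p" unfolding pjoin_def using join_comm M by (simp add: Un_commute)
  then show "jt X Y = jt Y X" using tjoin_cls pqr XYZ by simp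
  have "pjoin (pjoin p q) r = pjoin p (pjoin q r)" unfolding pjoin_def using join_assoc M by (simp add: Un_assoc)
  then show "jt (jt X Y) Z = jt X (jt Y Z)" using tjoin_cls pjoin_in_Pdom pqr XYZ by simp
  have "pjoin p p = p" unfolding pjoin_def using join_idem M by simp
  then show "jt X X = X" using tjoin_cls pqr XYZ by simp
qed

lemma tcar_closure_semilattice: "closure_semilattice Mt jt Kt"
proof -
  interpret tilde: join_semilattice Mt jt by (rule tcar_join_semilattice)
  show ?thesis
  proof
    fix X Y assume "X \<in> Mt" "Y \<in> Mt"
    then obtain p q where pq: "p \<in> P" "q \<in> P" "X = cl p" "Y = cl q" by (metis tcar_cases)
    show "Kt X \<in> Mt" using tK_cls cls_in_tcar pK_in_Pdom pq by simp
    show "sle jt X (Kt X)" using tK_cls tle_cls pK_in_Pdom prec_pK_ext pq by simp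
    show "sle jt (Kt (Kt X)) (Kt X)" using tK_cls tle_cls pK_in_Pdom prec_pK_idem pq by simp
    show "sle jt (Kt X) (Kt Y)" if "sle jt X Y"
      using that tK_cls tle_cls pK_in_Pdom prec_pK_mono pq by simp
  qed
qed

sublocale tilde: closure_semilattice Mt jt Kt
  by (rule tcar_closure_semilattice)

lemma tS_iff: "St X Ys \<longleftrightarrow> X \<in> Mt \<and> Ys \<noteq> [] \<and> set Ys \<subseteq> Mt \<and> sle jt X (joinl jt (map Kt Ys))"
  unfolding tS_def by (rule refl)

lemma tilde_regular: "regular Mt jt St"
  by (rule closure_semilattice.regular_of_closure[OF tcar_closure_semilattice tS_iff])

lemma Kop_tilde: "X \<in> Mt \<Longrightarrow> Kop Mt jt St X = Kt X"
  by (rule closure_semilattice.Kop_of_closure[OF tcar_closure_semilattice tS_iff])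

abbreviation \<upsilon> :: "'a \<Rightarrow> ('a \<times> 'a set) set" where
  "\<upsilon> \<equiv> ups M j S"

lemma ups_in_tcar: "a \<in> M \<Longrightarrow> \<upsilon> a \<in> Mt"
  unfolding ups_def by (simp add: cls_in_tcar)

lemma tK_ups: "a \<in> M \<Longrightarrow> Kt (\<upsilon> a) = cl (a, {a})"
  unfolding ups_def using tK_cls[of "(a, {})"] by (simp add: pK_def jset_empty)

lemma joinl_tK_ups:
  assumes "bs \<noteq> []" "set bs \<subseteq> M"
  shows "joinl jt (map Kt (map \<upsilon> bs)) = cl (joinl j bs, set bs)"
  using assms
proof (induction bs rule: list_nonempty_induct)
  case (cons x xs)
  have "map Kt (map \<upsilon> xs) \<noteq> []" using cons.hyps by simp
  then have "joinl jt (map Kt (map \<upsilon> (x # xs))) = jt (cl (x, {x})) (cl (joinl j xs, set xs))"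
    using cons.IH cons.prems by (simp add: joinl_Cons tK_ups)
  also have "\<dots> = cl (joinl j (x # xs), set (x # xs))"
    using tjoin_cls joinl_closed cons joinl_Cons[of xs j x] by (simp add: pjoin_def)
  finally show ?case .
qed (simp add: tK_ups)

lemma cls_insert:
  assumes "a \<in> M" "finite B" "B \<subseteq> M" "b \<in> M"
  shows "cl (a, insert b B) = jt (cl (a, B)) (Kt (\<upsilon> b))"
proof -
  have in_P: "(a, insert b B) \<in> P" "(j a b, insert b B) \<in> P" using assms join_closed by auto
  have cover: "\<forall>x\<in>insert b B. \<exists>d\<in>insert b B. S x [d]"
    using spec_cover_subset[of "insert b B" "insert b B"] assms by simp
  have "le_spec (j a b) a (insert b B)"
    using le_spec_join le_spec_of_le le_spec_of_Sset Sset_elem le_refl assms in_P by auto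
  then have "(j a b, insert b B) \<preceq> (a, insert b B)"
    unfolding prec_iff using cover by simp
  moreover have "(a, insert b B) \<preceq> (j a b, insert b B)"
    unfolding prec_iff using le_spec_of_le join_closed join_upper1 cover assms by simp
  ultimately have "cl (a, insert b B) = cl (j a b, insert b B)" using cls_eq_iff in_P by blast
  also have "\<dots> = jt (cl (a, B)) (cl (b, {b}))" using tjoin_cls assms by (simp add: pjoin_def)
  finally show ?thesis using tK_ups assms(4) by simp
qed

lemma ups_mhom: "mhom M j S Mt jt St \<upsilon>"
  unfolding mhom_def
proof (intro conjI ballI allI impI)
  show "\<upsilon> a \<in> Mt" if "a \<in> M" for a using ups_in_tcar that .
  show "\<upsilon> (j a b) = jt (\<upsilon> a) (\<upsilon> b)" if "a \<in> M" "b \<in> M" for a b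
    unfolding ups_def using tjoin_cls[of "(a, {})" "(b, {})"] that by (simp add: pjoin_def)
  show "St (\<upsilon> a) (map \<upsilon> bs)" if "S a bs" for a bs
  proof -
    have M: "a \<in> M" "bs \<noteq> []" "set bs \<subseteq> M" "joinl j bs \<in> M" using S_dom[OF that] joinl_closed by auto
    have "le_spec a (joinl j bs) (set bs)" using le_spec_of_Sset Sset_iff that M by blast
    then have "(a, {}) \<preceq> (joinl j bs, set bs)" unfolding prec_iff by simp
    then have "sle jt (\<upsilon> a) (joinl jt (map Kt (map \<upsilon> bs)))"
      unfolding joinl_tK_ups[OF M(2,3)] ups_def using tle_cls M by simp
    then show ?thesis unfolding tS_iff using ups_in_tcar M by auto
  qed
qed

lemma ups_membedding: "membedding M j S Mt jt St \<upsilon>"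
  unfolding membedding_def
proof (intro conjI ballI allI impI)
  show "mhom M j S Mt jt St \<upsilon>" by (rule ups_mhom)
  show "inj_on \<upsilon> M"
  proof (rule inj_onI)
    fix a b assume "a \<in> M" "b \<in> M" "\<upsilon> a = \<upsilon> b"
    then have "(a, {}) \<preceq> (b, {})" "(b, {}) \<preceq> (a, {})" using cls_eq_iff unfolding ups_def by auto
    then show "a = b" using le_antisym \<open>a \<in> M\<close> \<open>b \<in> M\<close> unfolding prec_iff le_spec_def by auto
  qed
  show "S a bs" if "a \<in> M" and h: "bs \<noteq> [] \<and> set bs \<subseteq> M \<and> St (\<upsilon> a) (map \<upsilon> bs)" for a bs
  proof -
    have M: "bs \<noteq> []" "set bs \<subseteq> M" "joinl j bs \<in> M" using h joinl_closed by auto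
    have "sle jt (cl (a, {})) (cl (joinl j bs, set bs))"
      using h unfolding tS_iff joinl_tK_ups[OF M(1,2)] ups_def by simp
    then have "le_spec a (joinl j bs) (set bs)" using tle_cls M \<open>a \<in> M\<close> unfolding prec_iff by simp
    moreover have "S (joinl j bs) bs"
      by (rule joinl_induct[OF M(1,2)]) (use S_elem S_join M in auto)
    ultimately show "S a bs"
    proof (rule le_spec_induct[where P = "\<lambda>x. S x bs", OF _ \<open>a \<in> M\<close> M(3)])
      show "S d bs" if "Sset d (set bs)" for d using that Sset_iff[OF refl] by simp
    qed (use S_down S_join in blast)+
  qed
qed

lemma Khom_tilde_unique:
  assumes e1: "Khom Mt jt St T jT ST e1" and e2: "Khom Mt jt St T jT ST e2"
    and ups: "\<forall>a\<in>M. e1 (\<upsilon> a) = e2 (\<upsilon> a)" and "X \<in> Mt"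
  shows "e1 X = e2 X"
proof -
  have hom: "e (jt Y Z) = jT (e Y) (e Z)" "e (Kt Y) = Kop T jT ST (e Y)"
    if "Khom Mt jt St T jT ST e" "Y \<in> Mt" "Z \<in> Mt" for e Y Z
    using that Kop_tilde unfolding Khom_def mhom_def by auto
  have "e1 (cl (a, B)) = e2 (cl (a, B))" if "finite B" "B \<subseteq> M" "a \<in> M" for a B
    using that
  proof (induction B rule: finite_induct)
    case empty
    then show ?case using ups unfolding ups_def by simp
  next
    case (insert b B)
    have in_Mt: "cl (a, B) \<in> Mt" "Kt (\<upsilon> b) \<in> Mt" "\<upsilon> b \<in> Mt"
      using insert cls_in_tcar tK_ups ups_in_tcar by auto
    show ?case
      using cls_insert[of a B b] insert hom[OF e1 in_Mt(1,2)] hom[OF e2 in_Mt(1,2)]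
        hom[OF e1 in_Mt(3,3)] hom[OF e2 in_Mt(3,3)] ups by simp
  qed
  moreover obtain a B where "(a, B) \<in> P" "X = cl (a, B)"
    using \<open>X \<in> Mt\<close> by (metis tcar_cases surj_pair)
  ultimately show ?thesis by simp
qed

end

section \<open>The universal property\<close>

lemma regular_mass: "regular M j S \<Longrightarrow> mass M j S"
  unfolding regular_def principal_def by (elim conjE)

lemma mhom_comp:
  assumes f: "mhom A jA SA B jB SB f" and g: "mhom B jB SB C jC SC g"
  shows "mhom A jA SA C jC SC (\<lambda>a. g (f a))"
  unfolding mhom_def
proof (intro conjI ballI allI impI)
  show "g (f a) \<in> C" if "a \<in> A" for a using f g that unfolding mhom_def by blast
  show "g (f (jA a b)) = jC (g (f a)) (g (f b))" if "a \<in> A" "b \<in> A" for a b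
  proof -
    have "f (jA a b) = jB (f a) (f b)" "f a \<in> B" "f b \<in> B" using f that unfolding mhom_def by blast+
    then show ?thesis using g unfolding mhom_def by simp
  qed
  show "SC (g (f a)) (map (\<lambda>a. g (f a)) bs)" if "SA a bs" for a bs
  proof -
    have "SB (f a) (map f bs)" using f that unfolding mhom_def by blast
    then have "SC (g (f a)) (map g (map f bs))" using g unfolding mhom_def by blast
    then show ?thesis by (simp add: comp_def)
  qed
qed

locale hom_into_regular = spec_semilattice M j S
  for M :: "'a set" and j :: "'a \<Rightarrow> 'a \<Rightarrow> 'a" and S :: "'a \<Rightarrow> 'a list \<Rightarrow> bool" +
  fixes T :: "'b set" and jT :: "'b \<Rightarrow> 'b \<Rightarrow> 'b" and ST :: "'b \<Rightarrow> 'b list \<Rightarrow> bool"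
    and \<eta> :: "'a \<Rightarrow> 'b"
  assumes regular_T: "regular T jT ST" and eta_mhom: "mhom M j S T jT ST \<eta>"
begin

abbreviation KT :: "'b \<Rightarrow> 'b" where
  "KT \<equiv> Kop T jT ST"

lemma spec_semilattice_T: "spec_semilattice T jT ST"
  by (rule spec_semilattice.intro[OF regular_mass[OF regular_T]])

sublocale T: closure_semilattice T jT KT
  by (rule spec_semilattice.regular_closure_semilattice[OF spec_semilattice_T regular_T])

lemma ST_iff: "ST a bs \<longleftrightarrow> a \<in> T \<and> bs \<noteq> [] \<and> set bs \<subseteq> T \<and> T.le a (joinl jT (map KT bs))"
  by (rule spec_semilattice.regular_S_iff[OF spec_semilattice_T regular_T])

lemma eta_closed: "a \<in> M \<Longrightarrow> \<eta> a \<in> T"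
  using eta_mhom unfolding mhom_def by blast

lemma eta_join: "a \<in> M \<Longrightarrow> b \<in> M \<Longrightarrow> \<eta> (j a b) = jT (\<eta> a) (\<eta> b)"
  using eta_mhom unfolding mhom_def by blast

lemma eta_S: "S a bs \<Longrightarrow> ST (\<eta> a) (map \<eta> bs)"
  using eta_mhom unfolding mhom_def by blast

lemma eta_mono: "a \<in> M \<Longrightarrow> b \<in> M \<Longrightarrow> le a b \<Longrightarrow> T.le (\<eta> a) (\<eta> b)"
  unfolding sle_def by (metis eta_join)

lemma eta_le_KT: "S b [d] \<Longrightarrow> T.le (\<eta> b) (KT (\<eta> d))"
  using eta_S[of b "[d]"] ST_iff by simp

lemma eta_le_of_Sset:
  assumes "Sset d D" "z \<in> T" "\<forall>x\<in>D. T.le (KT (\<eta> x)) z"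
  shows "T.le (\<eta> d) z"
proof -
  obtain ds where ds: "set ds = D" "S d ds" using assms(1) unfolding Sset_def by blast
  have M: "d \<in> M" "ds \<noteq> []" "set ds \<subseteq> M" using S_dom[OF ds(2)] by auto
  have KT: "map KT (map \<eta> ds) \<noteq> []" "set (map KT (map \<eta> ds)) \<subseteq> T"
    using M eta_closed T.K_closed by auto
  have "T.le (\<eta> d) (joinl jT (map KT (map \<eta> ds)))" using eta_S[OF ds(2)] ST_iff by simp
  moreover have "T.le (joinl jT (map KT (map \<eta> ds))) z"
    using T.joinl_le_iff[OF KT assms(2)] assms(3) ds(1) by simp
  ultimately show ?thesis
    using T.le_trans[OF eta_closed[OF M(1)] T.joinl_closed[OF KT] assms(2)] by blast
qed

definition lift_pair :: "'a \<times> 'a set \<Rightarrow> 'b" where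
  "lift_pair p = jset jT (\<eta> (fst p)) ((\<lambda>b. KT (\<eta> b)) ` snd p)"

lemma lift_pair_closed_le_iff:
  assumes "p \<in> P"
  shows "lift_pair p \<in> T"
    and "z \<in> T \<Longrightarrow> T.le (lift_pair p) z \<longleftrightarrow> T.le (\<eta> (fst p)) z \<and> (\<forall>b\<in>snd p. T.le (KT (\<eta> b)) z)"
proof -
  have h: "finite ((\<lambda>b. KT (\<eta> b)) ` snd p)" "(\<lambda>b. KT (\<eta> b)) ` snd p \<subseteq> T" "\<eta> (fst p) \<in> T"
    using assms eta_closed T.K_closed unfolding Pdom_def by auto
  show "lift_pair p \<in> T" unfolding lift_pair_def using T.jset_closed[OF h] .
  show "T.le (lift_pair p) z \<longleftrightarrow> T.le (\<eta> (fst p)) z \<and> (\<forall>b\<in>snd p. T.le (KT (\<eta> b)) z)" if "z \<in> T"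
    unfolding lift_pair_def using T.jset_le_iff[OF h that] by simp
qed

lemma lift_pair_upper:
  assumes "p \<in> P"
  shows "T.le (\<eta> (fst p)) (lift_pair p)" and "b \<in> snd p \<Longrightarrow> T.le (KT (\<eta> b)) (lift_pair p)"
  using lift_pair_closed_le_iff(2)[OF assms lift_pair_closed_le_iff(1)[OF assms]] T.le_refl[OF lift_pair_closed_le_iff(1)[OF assms]]
  by simp_all

lemma lift_pair_mono:
  assumes "p \<in> P" "q \<in> P" "p \<preceq> q"
  shows "T.le (lift_pair p) (lift_pair q)"
proof -
  obtain a B c D where pq: "p = (a, B)" "q = (c, D)" by (metis surj_pair)
  have M: "a \<in> M" "B \<subseteq> M" "c \<in> M" "D \<subseteq> M" using assms(1,2) pq by auto
  have le: "le_spec a c D" "\<forall>b\<in>B. \<exists>d\<in>D. S b [d]" using assms(3) pq prec_iff by auto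
  have Fq: "lift_pair q \<in> T" "T.le (\<eta> c) (lift_pair q)" "\<forall>d\<in>D. T.le (KT (\<eta> d)) (lift_pair q)"
    using lift_pair_closed_le_iff(1) lift_pair_upper assms(2) pq by auto
  have "T.le (\<eta> a) (lift_pair q)"
  proof (rule le_spec_induct[where P = "\<lambda>x. T.le (\<eta> x) (lift_pair q)", OF le(1) M(1,3) Fq(2)])
    show "T.le (\<eta> d) (lift_pair q)" if "Sset d D" for d using eta_le_of_Sset[OF that Fq(1,3)] .
    show "T.le (\<eta> x) (lift_pair q)" if "x \<in> M" "y \<in> M" "le x y" "T.le (\<eta> y) (lift_pair q)" for x y
      using T.le_trans[OF eta_closed eta_closed Fq(1)] eta_mono that by blast
    show "T.le (\<eta> (j x y)) (lift_pair q)" if "x \<in> M" "y \<in> M" "T.le (\<eta> x) (lift_pair q)" "T.le (\<eta> y) (lift_pair q)" for x y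
      using T.join_least[OF eta_closed eta_closed Fq(1)] eta_join that by simp
  qed
  moreover have "T.le (KT (\<eta> b)) (lift_pair q)" if "b \<in> B" for b
  proof -
    obtain d where d: "d \<in> D" "S b [d]" using le(2) \<open>b \<in> B\<close> by blast
    have "T.le (KT (\<eta> b)) (KT (\<eta> d))"
      using T.K_le_K eta_closed eta_le_KT[OF d(2)] M d(1) that by blast
    then show ?thesis
      using T.le_trans T.K_closed eta_closed Fq(1,3) M d(1) that by (meson subsetD)
  qed
  ultimately show ?thesis using lift_pair_closed_le_iff(2)[OF assms(1) Fq(1)] pq by simp
qed

lemma lift_pair_pjoin:
  assumes "p \<in> P" "q \<in> P"
  shows "lift_pair (pjoin p q) = jT (lift_pair p) (lift_pair q)"
proof (rule T.eq_if_same_upper_bounds)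
  have M: "fst p \<in> M" "fst q \<in> M" using assms unfolding Pdom_def by auto
  show "lift_pair (pjoin p q) \<in> T" "jT (lift_pair p) (lift_pair q) \<in> T"
    using lift_pair_closed_le_iff(1) pjoin_in_Pdom assms T.join_closed by auto
  show "T.le (lift_pair (pjoin p q)) z \<longleftrightarrow> T.le (jT (lift_pair p) (lift_pair q)) z" if "z \<in> T" for z
    using lift_pair_closed_le_iff[OF pjoin_in_Pdom[OF assms]] lift_pair_closed_le_iff[OF assms(1)]
      lift_pair_closed_le_iff[OF assms(2)] T.join_le_iff eta_join eta_closed M that
    unfolding pjoin_def by auto
qed

lemma lift_pair_pK:
  assumes "p \<in> P"
  shows "lift_pair (pK p) = KT (lift_pair p)"
proof -
  obtain a B where p: "p = (a, B)" by (metis surj_pair)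
  have M: "a \<in> M" "B \<subseteq> M" "finite B" using assms p by auto
  define w where "w = jset j a B"
  have w: "w \<in> M" "le a w" "\<forall>b\<in>B. le b w" using jset_closed jset_upper M unfolding w_def by auto
  have pK: "pK p = (a, {w})" "pK p \<in> P" using pK_in_Pdom assms unfolding p pK_def w_def by auto
  have Fp: "lift_pair p \<in> T" "T.le (\<eta> a) (lift_pair p)" "\<forall>b\<in>B. T.le (KT (\<eta> b)) (lift_pair p)"
    using lift_pair_closed_le_iff(1) lift_pair_upper assms p by auto
  have Fk: "lift_pair (pK p) \<in> T" "T.le (KT (\<eta> w)) (lift_pair (pK p))"
    using lift_pair_closed_le_iff(1) lift_pair_upper pK by auto
  have KFp: "KT (lift_pair p) \<in> T" "T.le (lift_pair p) (KT (lift_pair p))" using T.K_closed T.K_ext Fp(1) by auto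
  have eta_w: "\<eta> w \<in> T" "KT (\<eta> w) \<in> T" using eta_closed T.K_closed w(1) by auto
  have "T.le (\<eta> w) (lift_pair p)"
    unfolding w_def
  proof (rule jset_induct[OF M(3,2,1), where P = "\<lambda>x. T.le (\<eta> x) (lift_pair p)"])
    show "T.le (\<eta> a) (lift_pair p)" by (rule Fp(2))
    show "\<forall>b\<in>B. T.le (\<eta> b) (lift_pair p)"
      using T.le_trans[OF eta_closed T.K_closed Fp(1)] T.K_ext eta_closed Fp(3) M(2) by blast
    show "T.le (\<eta> (j x y)) (lift_pair p)" if "x \<in> M" "y \<in> M" "T.le (\<eta> x) (lift_pair p)" "T.le (\<eta> y) (lift_pair p)" for x y
      using T.join_least[OF eta_closed eta_closed Fp(1)] eta_join that by simp
  qed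
  then have "T.le (KT (\<eta> w)) (KT (lift_pair p))" using T.K_mono eta_w Fp(1) by blast
  then have "T.le (lift_pair (pK p)) (KT (lift_pair p))"
    using lift_pair_closed_le_iff(2)[OF pK(2) KFp(1)] T.le_trans[OF _ Fp(1) KFp(1) Fp(2) KFp(2)] M(1) eta_closed
    unfolding pK(1) by simp
  moreover have "T.le (KT (lift_pair p)) (lift_pair (pK p))"
  proof -
    have "T.le (\<eta> a) (\<eta> w)" using eta_mono M(1) w(1,2) .
    then have "T.le (\<eta> a) (KT (\<eta> w))"
      using T.le_trans[OF eta_closed[OF M(1)] eta_w _ T.K_ext[OF eta_w(1)]] by blast
    moreover have "T.le (KT (\<eta> b)) (KT (\<eta> w))" if "b \<in> B" for b
    proof -
      have "b \<in> M" using M(2) that by blast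
      then show ?thesis using T.K_mono[OF eta_closed eta_w(1) eta_mono] w(1,3) that by blast
    qed
    ultimately have "T.le (lift_pair p) (KT (\<eta> w))"
      using lift_pair_closed_le_iff(2)[OF assms eta_w(2)] p by simp
    then have "T.le (KT (lift_pair p)) (KT (\<eta> w))" by (rule T.K_le_K[OF Fp(1) eta_w(1)])
    then show ?thesis using T.le_trans[OF KFp(1) eta_w(2) Fk(1) _ Fk(2)] by blast
  qed
  ultimately show ?thesis using T.le_antisym Fk(1) KFp(1) by blast
qed

definition lift :: "('a \<times> 'a set) set \<Rightarrow> 'b" where
  "lift X = lift_pair (SOME p. p \<in> X)"

lemma lift_cls:
  assumes "p \<in> P"
  shows "lift (cl p) = lift_pair p"
proof -
  define p' where "p' = (SOME p'. p' \<in> cl p)"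
  have "p' \<in> cl p" unfolding p'_def using cls_self[OF assms] by (rule someI)
  then have p': "p' \<in> P" "p' \<preceq> p" "p \<preceq> p'" unfolding cls_def by auto
  have "lift_pair p' = lift_pair p"
    using T.le_antisym[OF lift_pair_closed_le_iff(1)[OF p'(1)] lift_pair_closed_le_iff(1)[OF assms]]
      lift_pair_mono[OF p'(1) assms p'(2)] lift_pair_mono[OF assms p'(1) p'(3)] by blast
  then show ?thesis unfolding lift_def p'_def .
qed

lemma lift_ups: "a \<in> M \<Longrightarrow> lift (\<upsilon> a) = \<eta> a"
  unfolding ups_def by (simp add: lift_cls lift_pair_def T.jset_empty)

lemma lift_closed: "X \<in> Mt \<Longrightarrow> lift X \<in> T"
  by (elim tcar_cases) (simp add: lift_cls lift_pair_closed_le_iff(1))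

lemma lift_join: "X \<in> Mt \<Longrightarrow> Y \<in> Mt \<Longrightarrow> lift (jt X Y) = jT (lift X) (lift Y)"
  by (elim tcar_cases) (simp add: tjoin_cls lift_cls lift_pair_pjoin pjoin_in_Pdom)

lemma lift_Kt: "X \<in> Mt \<Longrightarrow> lift (Kt X) = KT (lift X)"
  by (elim tcar_cases) (simp add: tK_cls lift_cls lift_pair_pK pK_in_Pdom)

lemma lift_St:
  assumes "St X Ys"
  shows "ST (lift X) (map lift Ys)"
proof -
  have X: "X \<in> Mt" and Ys: "Ys \<noteq> []" "set Ys \<subseteq> Mt"
    and le: "sle jt X (joinl jt (map Kt Ys))"
    using assms unfolding tS_def by blast+
  have KYs: "map Kt Ys \<noteq> []" "set (map Kt Ys) \<subseteq> Mt" using Ys tilde.K_closed by auto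
  define J where "J = joinl jt (map Kt Ys)"
  have J: "J \<in> Mt" using tilde.joinl_closed[OF KYs] unfolding J_def .
  have "lift J = joinl jT (map lift (map Kt Ys))"
    unfolding J_def
    by (rule joinl_hom[OF tcar_join_semilattice, where f = lift and jB = jT, OF lift_join KYs])
  also have "map lift (map Kt Ys) = map KT (map lift Ys)"
    using lift_Kt Ys(2) by (simp add: subset_iff)
  finally have lift_J: "lift J = joinl jT (map KT (map lift Ys))" .
  have "jt X J = J" using le unfolding J_def sle_def .
  then have "lift J = jT (lift X) (lift J)" using lift_join[OF X J] by (rule subst)
  then have "T.le (lift X) (joinl jT (map KT (map lift Ys)))"
    unfolding sle_def lift_J[symmetric] by (rule sym)
  moreover have "set (map lift Ys) \<subseteq> T" using lift_closed Ys(2) by auto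
  ultimately show ?thesis using ST_iff[of "lift X" "map lift Ys"] lift_closed[OF X] Ys(1) by simp
qed

lemma lift_Khom: "Khom Mt jt St T jT ST lift"
  unfolding Khom_def mhom_def
  by (intro conjI ballI allI impI) (simp_all add: lift_closed lift_join lift_St lift_Kt Kop_tilde)

end

lemma (in spec_semilattice) universal_property:
  assumes "regular T jT ST" "mhom M j S T jT ST \<eta>"
  shows "\<exists>e. Khom Mt jt St T jT ST e \<and> (\<forall>a\<in>M. e (\<upsilon> a) = \<eta> a)
    \<and> (\<forall>e'. Khom Mt jt St T jT ST e' \<and> (\<forall>a\<in>M. e' (\<upsilon> a) = \<eta> a) \<longrightarrow> (\<forall>X\<in>Mt. e' X = e X))"
proof -
  interpret hom_into_regular M j S T jT ST \<eta>
    using assms by unfold_locales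
  show ?thesis
  proof (intro exI[of _ lift] conjI allI impI ballI)
    show "Khom Mt jt St T jT ST lift" by (rule lift_Khom)
    show "lift (\<upsilon> a) = \<eta> a" if "a \<in> M" for a using lift_ups that .
    show "e' X = lift X"
      if "Khom Mt jt St T jT ST e' \<and> (\<forall>a\<in>M. e' (\<upsilon> a) = \<eta> a)" "X \<in> Mt" for e' X
      using Khom_tilde_unique[OF _ lift_Khom _ \<open>X \<in> Mt\<close>] that lift_ups by simp
  qed
qed

theorem theorem4p4:
  fixes M :: "'a set" and j :: "'a \<Rightarrow> 'a \<Rightarrow> 'a" and S :: "'a \<Rightarrow> 'a list \<Rightarrow> bool"
  assumes "mass M j S"
  shows "regular (tcar M j S) (tjoin M j S) (tS M j S)
   \<and> membedding M j S (tcar M j S) (tjoin M j S) (tS M j S) (ups M j S)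
   \<and> (\<forall>(T :: 'b set) jT ST \<eta>. regular T jT ST \<and> mhom M j S T jT ST \<eta> \<longrightarrow>
        (\<exists>e. Khom (tcar M j S) (tjoin M j S) (tS M j S) T jT ST e
             \<and> (\<forall>a\<in>M. e (ups M j S a) = \<eta> a)
             \<and> (\<forall>e'. Khom (tcar M j S) (tjoin M j S) (tS M j S) T jT ST e'
                     \<and> (\<forall>a\<in>M. e' (ups M j S a) = \<eta> a)
                     \<longrightarrow> (\<forall>X\<in>tcar M j S. e' X = e X))))
   \<and> (\<forall>(U :: 'c set) jU SU \<psi>. mass U jU SU \<and> mhom M j S U jU SU \<psi> \<longrightarrow>
        (\<exists>e. Khom (tcar M j S) (tjoin M j S) (tS M j S) (tcar U jU SU) (tjoin U jU SU) (tS U jU SU) e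
             \<and> (\<forall>a\<in>M. e (ups M j S a) = ups U jU SU (\<psi> a))
             \<and> (\<forall>e'. Khom (tcar M j S) (tjoin M j S) (tS M j S) (tcar U jU SU) (tjoin U jU SU) (tS U jU SU) e'
                     \<and> (\<forall>a\<in>M. e' (ups M j S a) = ups U jU SU (\<psi> a))
                     \<longrightarrow> (\<forall>X\<in>tcar M j S. e' X = e X))))"
proof -
  interpret spec_semilattice M j S using assms by (rule spec_semilattice.intro)
  show ?thesis
  proof (intro conjI allI impI)
    show "regular Mt jt St" by (rule tilde_regular)
    show "membedding M j S Mt jt St \<upsilon>" by (rule ups_membedding)
  next
    fix T :: "'b set" and jT ST \<eta>
    assume "regular T jT ST \<and> mhom M j S T jT ST \<eta>"
    then show "\<exists>e. Khom Mt jt St T jT ST e \<and> (\<forall>a\<in>M. e (\<upsilon> a) = \<eta> a)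
      \<and> (\<forall>e'. Khom Mt jt St T jT ST e' \<and> (\<forall>a\<in>M. e' (\<upsilon> a) = \<eta> a) \<longrightarrow> (\<forall>X\<in>Mt. e' X = e X))"
      using universal_property by blast
  next
    fix U :: "'c set" and jU SU \<psi>
    assume h: "mass U jU SU \<and> mhom M j S U jU SU \<psi>"
    interpret U: spec_semilattice U jU SU using h by (intro spec_semilattice.intro) blast
    have "mhom M j S U.Mt U.jt U.St (\<lambda>a. U.\<upsilon> (\<psi> a))"
      using mhom_comp[OF _ U.ups_mhom] h by blast
    then show "\<exists>e. Khom Mt jt St U.Mt U.jt U.St e \<and> (\<forall>a\<in>M. e (\<upsilon> a) = U.\<upsilon> (\<psi> a))
      \<and> (\<forall>e'. Khom Mt jt St U.Mt U.jt U.St e' \<and> (\<forall>a\<in>M. e' (\<upsilon> a) = U.\<upsilon> (\<psi> a))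
        \<longrightarrow> (\<forall>X\<in>Mt. e' X = e X))"
      using universal_property[OF U.tilde_regular] by blast
  qed
qed

end
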